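(* Let $n\ge2$, let $(V,\omega_V,\mathcal L_V,h_V)$ be an $n$-dimensional complex hyperbolic cusp (trivial group), and let $\kappa\in(0,e^{-1})$. Then there is a constant $C>0$ depending only on $\kappa$ and the cusp such that for every constant $\mathfrak K>0$, all integers $m\ge n+1$ and $1\le q\le e^{-4(\mathfrak K+|\log|\log\kappa||+n+4)}m$, and every $S_q\in H^0(D,\mathcal L_D^{-q})$, $$\|a_{m,q}f_{S_q}e^m_{\mathcal L_V}\|^2_{L^2,V\setminus V_\kappa;h_V^m,\omega_V}\le Ce^{-4\mathfrak Km}\|S_q\|^2_{L^2,D;h_D^{-q},\omega_D},$$ where $a_{m,q}=\sqrt{\frac{nq^{m-n}}{2\pi(m-n-1)!}}$.
   Context: Complex hyperbolic cusp: $D$ is a flat Abelian variety of complex dimension $n-1$ with flat Kähler form $\omega_D$, $(\mathcal L_D,h_D)$ a Hermitian line bundle on $D$ with curvature form $-\omega_D$; $h_D$ also denotes $v\mapsto h_D(v,v)$ on the total space of $\mathcal L_D$; $V=\{0<h_D<1\}$, $V_t=\{0<h_D<t\}$, $\omega_V=-\sqrt{-1}\partial\bar\partial\log(-\log h_D)$; $\mathcal L_V$ is the trivial line bundle on $V$ with frame $e_{\mathcal L_V}$ and metric $h_V$ with $\|e_{\mathcal L_V}\|^2_{h_V}=|\log h_D|$. For $S\in H^0(D,\mathcal L_D^{-q})$, $f_S(v)=S(v^{\otimes q})$. $\|\cdot\|^2_{L^2,W;h,\omega}=\int_W\|\cdot\|_h^2\,\omega^{\dim}/\dim!$. *)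

theory Defs
  imports "HOL-Analysis.Analysis"
begin

text \<open>Complex dimension of D is CARD('d) = n-1; points of the total space of the
pull-back of L_D to the universal cover C^(n-1) are vectors p :: complex^('d option),
with base coordinates p$(Some j) and fibre coordinate p$None.\<close>

definition base_pt :: "complex^('d::finite option) \<Rightarrow> complex^'d" where
  "base_pt p = (\<chi> j. p $ Some j)"

definition fib_pt :: "complex^('d::finite option) \<Rightarrow> complex" where
  "fib_pt p = p $ None"

text \<open>Hermitian form of the flat Kaehler form omega_D = i sum g_jk dz_j /\ dzbar_k.\<close>
definition herm :: "complex^'d^'d \<Rightarrow> complex^'d \<Rightarrow> complex^'d \<Rightarrow> complex" where
  "herm g z u = (\<Sum>j\<in>UNIV. \<Sum>k\<in>UNIV. g$j$k * z$j * cnj (u$k))"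

definition flat_kaehler :: "complex^'d^'d \<Rightarrow> bool" where
  "flat_kaehler g \<longleftrightarrow> (\<forall>j k. g$k$j = cnj (g$j$k)) \<and>
     (\<forall>u. u \<noteq> 0 \<longrightarrow> Re (herm g u u) > 0)"

text \<open>h_D as a function on the total space: h_D(z,w) = |w|^2 exp(G(z,z)),
 so that sqrt(-1) ddbar log h_D = omega_D.\<close>
definition hD :: "complex^'d^'d \<Rightarrow> complex^('d::finite option) \<Rightarrow> real" where
  "hD g p = (cmod (fib_pt p))^2 * exp (Re (herm g (base_pt p) (base_pt p)))"

definition int_pts :: "(complex^'d) set" where
  "int_pts = {z. \<forall>j. Re (z$j) \<in> \<int> \<and> Im (z$j) \<in> \<int>}"

definition lattice :: "(complex^'d \<Rightarrow> complex^'d) \<Rightarrow> (complex^'d) set" where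
  "lattice Lm = Lm ` int_pts"

definition fund_dom :: "(complex^'d \<Rightarrow> complex^'d) \<Rightarrow> (complex^'d) set" where
  "fund_dom Lm = Lm ` {z. \<forall>j. Re (z$j) \<in> {0..<1} \<and> Im (z$j) \<in> {0..<1}}"

definition holo :: "(complex^'d \<Rightarrow> complex) \<Rightarrow> bool" where
  "holo f \<longleftrightarrow> (\<forall>z. \<exists>D. (f has_derivative D) (at z) \<and> (\<forall>(c::complex) h. D (c *s h) = c * D h))"

text \<open>Factor of automorphy of (L_D, h_D): the lattice acts on C^(n-1) x C by
 (z,w) -> (z + lam, e lam z * w); D = C^(n-1)/Lambda, L_D = (C^(n-1) x C)/Lambda.\<close>
definition cusp_data :: "(complex^'d \<Rightarrow> complex^'d) \<Rightarrow> complex^'d^'d \<Rightarrow>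
    (complex^'d \<Rightarrow> complex^'d \<Rightarrow> complex) \<Rightarrow> bool" where
  "cusp_data Lm g e \<longleftrightarrow> linear Lm \<and> bij Lm \<and> flat_kaehler g \<and>
    (\<forall>lam\<in>lattice Lm. holo (e lam) \<and> (\<forall>z. e lam z \<noteq> 0) \<and>
       (\<forall>z. (cmod (e lam z))^2 * exp (Re (herm g (z + lam) (z + lam))) = exp (Re (herm g z z)))) \<and>
    (\<forall>lam\<in>lattice Lm. \<forall>mu\<in>lattice Lm. \<forall>z. e (lam + mu) z = e lam (z + mu) * e mu z)"

text \<open>Holomorphic sections S of L_D^(-q), represented by theta with f_S(z,w) = theta z * w^q,
 f_S invariant under the lattice action.\<close>
definition is_section :: "(complex^'d \<Rightarrow> complex^'d) \<Rightarrow> (complex^'d \<Rightarrow> complex^'d \<Rightarrow> complex)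
    \<Rightarrow> nat \<Rightarrow> (complex^'d \<Rightarrow> complex) \<Rightarrow> bool" where
  "is_section Lm e q th \<longleftrightarrow> holo th \<and>
     (\<forall>lam\<in>lattice Lm. \<forall>z. th (z + lam) * (e lam z)^q = th z)"

definition dirderiv :: "(complex^'n::finite \<Rightarrow> real) \<Rightarrow> complex^'n \<Rightarrow> complex^'n \<Rightarrow> real" where
  "dirderiv F u p = deriv (\<lambda>t. F (p + t *\<^sub>R u)) 0"

text \<open>Complex Hessian (d_j dbar_k F)(p), via real second derivatives.\<close>
definition levi :: "(complex^'n::finite \<Rightarrow> real) \<Rightarrow> complex^'n \<Rightarrow> complex^'n^'n" where
  "levi F p = (\<chi> j k.
     (let dd = (\<lambda>u v. dirderiv (\<lambda>q. dirderiv F v q) u p);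
          x = (\<lambda>i. axis i (1::complex)); y = (\<lambda>i. axis i \<i>)
      in (1/4) * (complex_of_real (dd (x j) (x k) + dd (y j) (y k))
                   + \<i> * complex_of_real (dd (x j) (y k) - dd (y j) (x k)))))"

text \<open>Density w.r.t. Lebesgue measure of (i ddbar F)^N / N!, N = CARD('n).\<close>
definition vol_density :: "(complex^'n::finite \<Rightarrow> real) \<Rightarrow> complex^'n \<Rightarrow> real" where
  "vol_density F p = 2 ^ CARD('n) * Re (det (levi F p))"

text \<open>omega_V = -i ddbar log(-log h_D) = i ddbar Phi_V.\<close>
definition PhiV :: "complex^'d^'d \<Rightarrow> complex^('d::finite option) \<Rightarrow> real" where
  "PhiV g p = - ln (- ln (hD g p))"

end

theory Submission
  imports Defs
begin

(*
  With l = -log h_D, the cusp potential is PhiV = -log l, and its Levi matrix is the Levi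
  matrix of log h_D (the Hermitian form g, padded by zeros in the fibre direction) divided by l,
  plus the rank-one matrix (d log h_D)(d log h_D)^* / l^2, whose fibre entry is 1 / |w|^2.
  Hence the volume density of omega_V is 2^n det g / (l^(n+1) |w|^2).  On {kappa <= h_D < 1}
  one has l <= |log kappa| and |w|^2 <= exp (-G(z,z)), so the integrand is dominated by a
  function whose fibres are discs of area pi exp (-G(z,z)); integrating them turns
  |w|^(2(q-1)) into the weight exp (-q G(z,z)) of the section on D.  What remains is the
  coefficient n q^(m-n) |log kappa|^(m-n-1) / (m-n-1)!, and the smallness of q relative to m
  bounds it by n (n+1)! exp (-4 K m).
*)


section \<open>Determinants of matrices indexed by an option type\<close>

lemma map_permutation_Some: "map_permutation UNIV Some q = map_option q"
proof
  fix x :: "'a option"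
  show "map_permutation UNIV Some q x = map_option q x"
    by (cases x) (auto simp: map_permutation_def restrict_id_def)
qed

lemma
  assumes "(q :: 'a::finite \<Rightarrow> 'a) permutes UNIV"
  shows permutes_map_option: "map_option q permutes UNIV"
    and sign_map_option: "sign (map_option q) = sign q"
proof -
  have "map_permutation UNIV Some q permutes range Some"
    by (rule map_permutation_permutes[OF _ assms]) (simp add: bij_betw_def)
  then show "map_option q permutes UNIV"
    unfolding map_permutation_Some by (rule permutes_subset) simp
  show "sign (map_option q) = sign q"
    using sign_map_permutation[of Some UNIV q] assms unfolding map_permutation_Some by simp
qed

lemma permutes_fixing_None:
  assumes p: "p permutes (UNIV :: 'a::finite option set)" and "p None = None"
  shows "\<exists>q. q permutes UNIV \<and> p = map_option q"
proof -
  have inj: "inj p" using p by (rule permutes_inj)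
  have ns: "p (Some j) \<noteq> None" for j
    using injD[OF inj, of "Some j" None] assms(2) by auto
  define q where "q j = the (p (Some j))" for j
  have pq: "p = map_option q"
  proof
    fix x show "p x = map_option q x"
      using ns assms(2) by (cases x) (auto simp: q_def)
  qed
  have "bij q"
  proof (rule bijI)
    show "inj q"
    proof (rule injI)
      fix a b assume "q a = q b"
      then have "p (Some a) = p (Some b)" unfolding pq by simp
      then show "a = b" using injD[OF inj] by blast
    qed
    show "surj q"
    proof -
      have "\<exists>j. b = q j" for b
      proof -
        obtain x where x: "p x = Some b" using p unfolding permutes_univ by blast
        then obtain j where "x = Some j" using assms(2) by (cases x) auto
        then show ?thesis using x unfolding q_def by (metis option.sel)
      qed
      then show ?thesis unfolding surj_def by blast
    qed
  qed
  then show ?thesis using pq bij_imp_permutes by blast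
qed

lemma det_option_block:
  fixes B :: "'a::comm_ring_1^('d::finite option)^('d option)"
  assumes "\<And>j. j \<noteq> None \<Longrightarrow> B$j$None = 0"
  shows "det B = B$None$None * det (\<chi> j k. B$(Some j)$(Some k))"
proof -
  let ?f = "\<lambda>p. of_int (sign p) * (\<Prod>i\<in>UNIV. B$i$(p i))"
  let ?P = "{p. p permutes (UNIV :: 'd option set)}"
  let ?Pfix = "{p. p permutes (UNIV :: 'd option set) \<and> p None = None}"
  let ?Q = "{q. q permutes (UNIV :: 'd set)}"
  have "det B = sum ?f ?P" unfolding det_def ..
  also have "\<dots> = sum ?f ?Pfix"
  proof (rule sum.mono_neutral_right)
    show "\<forall>p\<in>?P - ?Pfix. ?f p = 0"
    proof
      fix p assume p: "p \<in> ?P - ?Pfix"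
      then have "p permutes UNIV" by simp
      then obtain i where i: "p i = None" unfolding permutes_univ by blast
      have "p None \<noteq> None" using p by simp
      with i have "i \<noteq> None" by (cases i) auto
      with i have "B$i$(p i) = 0" using assms by simp
      then have "(\<Prod>i\<in>UNIV. B$i$(p i)) = 0" by (intro prod_zero) auto
      then show "?f p = 0" by simp
    qed
  qed (auto simp: finite_permutations)
  also have "?Pfix = map_option ` ?Q"
  proof (intro equalityI subsetI)
    fix p assume "p \<in> ?Pfix"
    then show "p \<in> map_option ` ?Q" using permutes_fixing_None by blast
  next
    fix p assume "p \<in> map_option ` ?Q"
    then show "p \<in> ?Pfix" using permutes_map_option by auto
  qed
  also have "sum ?f (map_option ` ?Q) = sum (?f \<circ> map_option) ?Q"
  proof (rule sum.reindex, rule inj_onI)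
    fix q1 q2 :: "'d \<Rightarrow> 'd" assume eq: "map_option q1 = map_option q2"
    show "q1 = q2"
    proof
      fix j show "q1 j = q2 j" using fun_cong[OF eq, of "Some j"] by simp
    qed
  qed
  also have "\<dots> = (\<Sum>q\<in>?Q. B$None$None * (of_int (sign q) * (\<Prod>j\<in>UNIV. B$(Some j)$(Some (q j)))))"
  proof (rule sum.cong[OF refl])
    fix q assume "q \<in> ?Q"
    have "(\<Prod>i\<in>UNIV. B$i$(map_option q i)) = B$None$None * (\<Prod>j\<in>UNIV. B$(Some j)$(Some (q j)))"
      by (simp add: UNIV_option_conv prod.reindex)
    then show "(?f \<circ> map_option) q = B$None$None * (of_int (sign q) * (\<Prod>j\<in>UNIV. B$(Some j)$(Some (q j))))"
      using sign_map_option[of q] \<open>q \<in> ?Q\<close> by (simp add: mult_ac)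
  qed
  also have "\<dots> = B$None$None * det (\<chi> j k. B$(Some j)$(Some k))"
    unfolding det_def by (simp add: sum_distrib_left)
  finally show ?thesis .
qed

lemma det_rank_one_update_option:
  fixes M :: "'a::field^('d::finite option)^('d option)"
  assumes M: "\<And>j k. M$j$k = A j k + c j * b k"
    and A: "\<And>j. A j None = 0" "\<And>k. A None k = 0" and c: "c None \<noteq> 0"
  shows "det M = det (\<chi> j k. A (Some j) (Some k)) * (c None * b None)"
proof -
  \<comment> \<open>E subtracts the multiple c i / c None of row None from every other row i.\<close>
  define E :: "'a^('d option)^('d option)" where
    "E = (\<chi> i k. (if i = k then 1 else 0) - (if k = None \<and> i \<noteq> None then c i / c None else 0))"
  have EM: "(E ** M)$i$k = (if i = None then c None * b k else A i k)" for i k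
  proof -
    have "(E ** M)$i$k = M$i$k - (if i \<noteq> None then c i / c None * M$None$k else 0)"
      by (simp add: matrix_matrix_mult_def E_def left_diff_distrib sum_subtractf if_distrib[of "\<lambda>x. x * _"]
          sum.delta cong: if_cong)
    then show ?thesis using c by (simp add: M A)
  qed
  have "det E = det (transpose E)" by simp
  also have "\<dots> = (transpose E)$None$None * det (\<chi> j k. (transpose E)$(Some j)$(Some k))"
    by (rule det_option_block) (auto simp: transpose_def E_def)
  also have "(\<chi> j k. (transpose E)$(Some j)$(Some k)) = mat 1"
    by (simp add: transpose_def E_def mat_def vec_eq_iff)
  finally have "det E = 1" by (simp add: transpose_def E_def)
  then have "det M = det (E ** M)" by (simp add: det_mul)
  also have "\<dots> = (E ** M)$None$None * det (\<chi> j k. (E ** M)$(Some j)$(Some k))"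
    by (rule det_option_block) (auto simp: EM A)
  finally show ?thesis by (simp add: EM mult.commute)
qed

lemma det_scaled:
  fixes A :: "'a::field^'n^'n"
  shows "det (\<chi> j k. A$j$k / l) = (1 / l) ^ CARD('n) * det A"
proof -
  have "(\<chi> j k. A$j$k / l) = (\<chi> i. (1 / l) *s A$i)"
    by (simp add: vec_eq_iff)
  then show ?thesis using det_rows_mul[of "\<lambda>i. 1 / l" "\<lambda>i. A$i"] by simp
qed

section \<open>Lebesgue measure on vectors indexed by an option type\<close>

definition vec_option :: "('a^'d) \<times> 'a \<Rightarrow> 'a^('d::finite option)" where
  "vec_option x = (\<chi> i. case i of None \<Rightarrow> snd x | Some j \<Rightarrow> fst x $ j)"

lemma vec_option_nth [simp]:
  "vec_option x $ None = snd x" "vec_option x $ Some j = fst x $ j"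
  by (simp_all add: vec_option_def)

lemma continuous_on_vec_option: "continuous_on UNIV (vec_option :: ('a::real_normed_vector^'d) \<times> 'a \<Rightarrow> _)"
  unfolding vec_option_def
proof (intro continuous_intros)
  show "continuous_on UNIV (\<lambda>x::('a^'d) \<times> 'a. case i of None \<Rightarrow> snd x | Some j \<Rightarrow> fst x $ j)" for i
    by (cases i) (auto intro!: continuous_intros)
qed

lemma prod_Basis_vec: "(\<Prod>b\<in>Basis. (x::'a::euclidean_space^'n) \<bullet> b) = (\<Prod>i\<in>UNIV. \<Prod>u\<in>Basis. x$i \<bullet> u)"
proof -
  have eq: "(Basis :: ('a^'n) set) = (\<Union>i\<in>(UNIV::'n set). axis i ` (Basis::'a set))"
    unfolding Basis_vec_def by auto
  have "(\<Prod>b\<in>Basis. x \<bullet> b) = (\<Prod>i\<in>(UNIV::'n set). \<Prod>b\<in>axis i ` (Basis::'a set). x \<bullet> b)"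
    by (subst eq, rule prod.UNION_disjoint) (auto simp: axis_eq_axis)
  also have "\<dots> = (\<Prod>i\<in>UNIV. \<Prod>u\<in>Basis. x$i \<bullet> u)"
    by (subst prod.reindex) (auto simp: inj_on_def axis_eq_axis inner_axis)
  finally show ?thesis .
qed

lemma prod_Basis_vec_option:
  "(\<Prod>b\<in>Basis. (x::'a::euclidean_space^('n::finite option)) \<bullet> b)
    = (\<Prod>b\<in>Basis. (\<chi> j. x$Some j) \<bullet> b) * (\<Prod>b\<in>Basis. x$None \<bullet> b)"
  by (simp add: prod_Basis_vec UNIV_option_conv prod.reindex)

lemma vec_option_vimage_box:
  "vec_option -` box l u = box (\<chi> j. l$Some j) (\<chi> j. u$Some j) \<times> box (l$None) (u$None)"
proof -
  have "vec_option x \<in> box l u \<longleftrightarrow>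
      (\<forall>i. \<forall>b\<in>Basis. l$i \<bullet> b < vec_option x $ i \<bullet> b \<and> vec_option x $ i \<bullet> b < u$i \<bullet> b)" for x
    unfolding mem_box Basis_vec_def by (auto simp: inner_axis)
  also have "\<dots> x \<longleftrightarrow> (\<forall>j. \<forall>b\<in>Basis. l$Some j \<bullet> b < fst x $ j \<bullet> b \<and> fst x $ j \<bullet> b < u$Some j \<bullet> b)
      \<and> (\<forall>b\<in>Basis. l$None \<bullet> b < snd x \<bullet> b \<and> snd x \<bullet> b < u$None \<bullet> b)" for x
    by (metis (no_types, lifting) not_Some_eq vec_option_nth)
  also have "\<dots> x \<longleftrightarrow> fst x \<in> box (\<chi> j. l$Some j) (\<chi> j. u$Some j) \<and> snd x \<in> box (l$None) (u$None)" for x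
    unfolding mem_box Basis_vec_def by (auto simp: inner_axis)
  finally show ?thesis by (auto simp: mem_Times_iff)
qed

lemma vec_option_measurable: "vec_option \<in> borel_measurable (lborel \<Otimes>\<^sub>M lborel)"
  using borel_measurable_continuous_onI[OF continuous_on_vec_option] unfolding lborel_prod by simp

lemma lborel_vec_option:
  "(lborel :: ('a::euclidean_space^('d::finite option)) measure)
    = distr (lborel \<Otimes>\<^sub>M lborel) borel (vec_option :: ('a^'d) \<times> 'a \<Rightarrow> _)"
proof (rule lborel_eqI)
  fix l u :: "'a^('d option)"
  assume le: "\<And>b. b \<in> Basis \<Longrightarrow> l \<bullet> b \<le> u \<bullet> b"
  have le_base: "(\<chi> j. l$Some j) \<bullet> b \<le> (\<chi> j. u$Some j) \<bullet> b" if b: "b \<in> Basis" for b :: "'a^'d"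
  proof -
    from b obtain j c where "b = axis j c" "c \<in> Basis" unfolding Basis_vec_def by auto
    then show ?thesis using le[of "axis (Some j) c"] by (simp add: inner_axis)
  qed
  have le_fib: "l$None \<bullet> b \<le> u$None \<bullet> b" if "b \<in> Basis" for b :: 'a
    using le[of "axis None b"] that by (simp add: inner_axis)
  have "emeasure (distr (lborel \<Otimes>\<^sub>M lborel) borel (vec_option :: ('a^'d) \<times> 'a \<Rightarrow> _)) (box l u)
      = emeasure lborel (box (\<chi> j. l$Some j) (\<chi> j. u$Some j)) * emeasure lborel (box (l$None) (u$None))"
    by (simp add: emeasure_distr[OF vec_option_measurable] vec_option_vimage_box
        space_pair_measure lborel.emeasure_pair_measure_Times)
  also have "\<dots> = ennreal ((\<Prod>b\<in>Basis. ((\<chi> j. u$Some j) - (\<chi> j. l$Some j)) \<bullet> b)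
      * (\<Prod>b\<in>Basis. (u$None - l$None) \<bullet> b))"
    using le_base le_fib by (simp add: ennreal_mult prod_nonneg inner_diff_left)
  also have "(\<chi> j. u$Some j) - (\<chi> j. l$Some j) = (\<chi> j. (u - l)$Some j)"
    by (simp add: vec_eq_iff)
  also have "u$None - l$None = (u - l)$None"
    by simp
  also have "(\<Prod>b\<in>Basis. (\<chi> j. (u - l)$Some j) \<bullet> b) * (\<Prod>b\<in>Basis. (u - l)$None \<bullet> b)
      = (\<Prod>b\<in>Basis. (u - l) \<bullet> b)"
    by (rule prod_Basis_vec_option[symmetric])
  finally show "emeasure (distr (lborel \<Otimes>\<^sub>M lborel) borel (vec_option :: ('a^'d) \<times> 'a \<Rightarrow> _)) (box l u)
      = (\<Prod>b\<in>Basis. (u - l) \<bullet> b)" .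
qed simp

lemma nn_integral_lborel_vec_option:
  fixes f :: "('a::euclidean_space^'d::finite) \<times> 'a \<Rightarrow> ennreal"
  assumes "f \<in> borel_measurable borel"
  shows "(\<integral>\<^sup>+ p. f ((\<chi> j. p$Some j), p$None) \<partial>lborel) = (\<integral>\<^sup>+ z. \<integral>\<^sup>+ w. f (z, w) \<partial>lborel \<partial>lborel)"
proof -
  have "(\<lambda>p::'a^('d option). ((\<chi> j. p$Some j), p$None)) \<in> borel_measurable borel"
    by (intro borel_measurable_continuous_onI continuous_intros)
  then have "(\<integral>\<^sup>+ p. f ((\<chi> j. p$Some j), p$None) \<partial>lborel)
      = (\<integral>\<^sup>+ x. f ((\<chi> j. vec_option x $ Some j), vec_option x $ None) \<partial>(lborel \<Otimes>\<^sub>M lborel))"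
    using assms by (subst lborel_vec_option) (simp add: nn_integral_distr[OF vec_option_measurable])
  also have "\<dots> = (\<integral>\<^sup>+ x. f x \<partial>(lborel \<Otimes>\<^sub>M lborel))" by simp
  also have "\<dots> = (\<integral>\<^sup>+ z. \<integral>\<^sup>+ w. f (z, w) \<partial>lborel \<partial>lborel)"
    using assms by (intro lborel.nn_integral_fst[symmetric]) (simp add: lborel_prod)
  finally show ?thesis .
qed

lemma emeasure_cball_complex:
  assumes "0 \<le> r"
  shows "emeasure lborel (cball (c::complex) r) = ennreal (pi * r\<^sup>2)"
  using emeasure_cball[OF assms, of c] unit_ball_vol_even[of 1] by simp

lemma nn_integral_indicator_disk:
  assumes "0 \<le> r"
  shows "(\<integral>\<^sup>+ w. indicator (cball (0::complex) r) w * ennreal c \<partial>lborel) = ennreal (c * (pi * r\<^sup>2))"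
proof -
  have "(\<integral>\<^sup>+ w. indicator (cball (0::complex) r) w * ennreal c \<partial>lborel)
      = ennreal c * emeasure lborel (cball (0::complex) r)"
    by (subst mult.commute) (simp add: nn_integral_cmult_indicator)
  then show ?thesis by (simp add: emeasure_cball_complex[OF assms] ennreal_mult'')
qed

lemma borel_measurable_disk_bundle:
  fixes F :: "'a::topological_space set" and r c :: "'a \<Rightarrow> real"
  assumes "F \<in> sets borel" "continuous_on UNIV r" "continuous_on UNIV c"
  shows "(\<lambda>x. indicator F (fst x) * indicator (cball 0 (r (fst x))) (snd x) * ennreal (c (fst x)))
    \<in> borel_measurable (borel :: ('a \<times> complex) measure)"
proof -
  have fst: "fst \<in> borel_measurable (borel :: ('a \<times> complex) measure)"
    by (intro borel_measurable_continuous_onI continuous_on_fst continuous_on_id)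
  have "closed {x :: 'a \<times> complex. cmod (snd x) \<le> r (fst x)}"
    by (intro closed_Collect_le continuous_intros continuous_on_compose2[OF assms(2)]) auto
  moreover have "(\<lambda>x. indicator (cball 0 (r (fst x))) (snd x) :: ennreal)
      = indicator {x :: 'a \<times> complex. cmod (snd x) \<le> r (fst x)}"
    by (auto simp: fun_eq_iff indicator_def)
  ultimately have "(\<lambda>x. indicator (cball 0 (r (fst x))) (snd x) :: ennreal)
      \<in> borel_measurable (borel :: ('a \<times> complex) measure)"
    by (simp add: borel_measurable_indicator)
  moreover have "(\<lambda>x. indicator F (fst x) :: ennreal) \<in> borel_measurable (borel :: ('a \<times> complex) measure)"
    by (rule measurable_compose[OF fst borel_measurable_indicator[OF assms(1)]])
  moreover have "(\<lambda>x. ennreal (c (fst x))) \<in> borel_measurable (borel :: ('a \<times> complex) measure)"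
    using measurable_compose[OF fst borel_measurable_continuous_onI[OF assms(3)]] by measurable
  ultimately show ?thesis by measurable
qed

lemma ennreal_mult_right_mono_real:
  assumes "0 \<le> a" "a \<le> b"
  shows "ennreal (a * c) \<le> ennreal (b * c)"
proof (cases "0 \<le> c")
  case True
  then show ?thesis using assms by (intro ennreal_leI mult_right_mono)
next
  case False
  then have "a * c \<le> 0" using assms(1) by (simp add: mult_nonneg_nonpos)
  then show ?thesis by (simp add: ennreal_neg)
qed

lemma power_div_fact_le_exp:
  fixes x :: real
  assumes "0 \<le> x"
  shows "x ^ k / fact k \<le> exp x"
proof -
  have "x ^ k / fact k = (\<Sum>n\<in>{k}. x ^ n /\<^sub>R fact n)" by (simp add: divide_inverse mult_ac)
  also have "\<dots> \<le> (\<Sum>n. x ^ n /\<^sub>R fact n)"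
    using assms by (intro sum_le_suminf summable_exp_generic) auto
  finally show ?thesis by (simp add: exp_def)
qed

lemma exp_scaled_power_div_fact_le:
  assumes "N \<le> m"
  shows "(exp (-2) * real m) ^ m / fact N \<le> fact (m - N)"
proof -
  define M where "M = real m"
  have M: "0 \<le> M" unfolding M_def by simp
  have "M ^ (m - N) \<le> fact (m - N) * exp M"
    using power_div_fact_le_exp[OF M, of "m - N"] by (simp add: divide_le_eq mult_ac)
  then have "exp (-2 * M) * (M ^ N / fact N) * M ^ (m - N) \<le> exp (-2 * M) * exp M * (fact (m - N) * exp M)"
    using power_div_fact_le_exp[OF M, of N] M by (intro mult_mono) auto
  also have "\<dots> = fact (m - N)" by (simp add: mult_ac flip: exp_add)
  also have "exp (-2 * M) * (M ^ N / fact N) * M ^ (m - N) = (exp (-2) * M) ^ m / fact N"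
    using assms unfolding M_def
    by (simp add: power_mult_distrib exp_of_nat_mult[symmetric] mult_ac flip: power_add)
  finally show ?thesis unfolding M_def .
qed

lemma power_Suc_mult_power_le:
  fixes x L t :: real
  assumes "1 \<le> x" "x \<le> t" "x * L \<le> t" "0 \<le> L" "N < m"
  shows "x ^ (N + 1) * L ^ N \<le> t ^ m"
proof -
  have "x ^ (N + 1) * L ^ N = x * (x * L) ^ N" by (simp add: power_mult_distrib)
  also have "\<dots> \<le> t * t ^ N" using assms by (intro mult_mono power_mono) auto
  also have "\<dots> = t ^ (N + 1)" by simp
  also have "\<dots> \<le> t ^ m" using assms by (intro power_increasing) auto
  finally show ?thesis .
qed

lemma cusp_coefficient_bound:
  fixes \<kappa> K :: real and n m q :: nat
  assumes \<kappa>: "0 < \<kappa>" "\<kappa> < 1" and "n < m" "1 \<le> q"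
    and q: "real q \<le> exp (-4 * (K + \<bar>ln \<bar>ln \<kappa>\<bar>\<bar> + real n + 4)) * real m"
  shows "real q ^ (m - n) * \<bar>ln \<kappa>\<bar> ^ (m - n - 1) / fact (m - n - 1) \<le> fact (n + 1) * exp (-4 * K * real m)"
proof -
  \<comment> \<open>Since L \<le> exp (4 A), both q and q L are bounded by t.\<close>
  define N L A t where "N = m - n - 1" "L = \<bar>ln \<kappa>\<bar>" "A = \<bar>ln L\<bar>"
    "t = exp (-4 * K) * exp (-2) * real m"
  have L: "0 < L" using \<kappa> unfolding N_L_A_t_def by simp
  have t: "0 \<le> t" unfolding N_L_A_t_def by simp
  have "exp (-4 * (K + A + real n + 4)) = exp (-4 * A) * (exp (-4 * K) * exp (- 4 * real n - 16))"
    by (simp add: mult_ac flip: exp_add)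
  also have "\<dots> \<le> exp (-4 * A) * (exp (-4 * K) * exp (-2))"
    by (intro mult_left_mono) auto
  finally have "exp (-4 * (K + A + real n + 4)) * real m \<le> exp (-4 * A) * (exp (-4 * K) * exp (-2)) * real m"
    by (rule mult_right_mono) simp
  then have q_le: "real q \<le> exp (-4 * A) * t"
    using q unfolding N_L_A_t_def by (simp add: mult_ac)
  have "exp (-4 * A) \<le> 1" unfolding N_L_A_t_def by simp
  then have "real q \<le> t" using q_le t by (meson mult_left_le_one_le order_trans exp_ge_zero)
  have "L = exp (ln L)" using L by simp
  also have "\<dots> \<le> exp (4 * A)" unfolding N_L_A_t_def by simp
  finally have lA: "L * exp (-4 * A) \<le> 1" by (simp add: exp_minus field_simps)
  have "real q * L \<le> exp (-4 * A) * t * L" using q_le L by (simp add: mult_right_mono)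
  also have "\<dots> = t * (L * exp (-4 * A))" by (simp add: mult_ac)
  also have "\<dots> \<le> t" using lA t by (simp add: mult_left_le)
  finally have "real q * L \<le> t" .
  then have "real q ^ (N + 1) * L ^ N \<le> t ^ m"
    using \<open>real q \<le> t\<close> \<open>1 \<le> q\<close> L \<open>n < m\<close> unfolding N_L_A_t_def by (intro power_Suc_mult_power_le) auto
  also have "\<dots> = exp (-4 * K * real m) * (exp (-2) * real m) ^ m"
    unfolding N_L_A_t_def by (simp add: power_mult_distrib exp_of_nat_mult[symmetric] mult_ac)
  finally have "real q ^ (N + 1) * L ^ N / fact N \<le> exp (-4 * K * real m) * ((exp (-2) * real m) ^ m / fact N)"
    by (simp add: divide_right_mono)
  also have "\<dots> \<le> exp (-4 * K * real m) * fact (m - N)"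
    using exp_scaled_power_div_fact_le[of N m] unfolding N_L_A_t_def by (intro mult_left_mono) auto
  finally show ?thesis
    using \<open>n < m\<close> unfolding N_L_A_t_def by (simp add: Suc_diff_Suc mult.commute)
qed

lemma vec_nth_scaleR_complex: "(t *\<^sub>R v) $ i = complex_of_real t * (v :: complex^'n) $ i"
  by (simp only: vector_scaleR_component) (simp add: scaleR_conv_of_real)

lemma base_pt_add [simp]: "base_pt (p + q) = base_pt p + base_pt q"
  by (simp add: base_pt_def vec_eq_iff)

lemma fib_pt_add [simp]: "fib_pt (p + q) = fib_pt p + fib_pt q"
  by (simp add: fib_pt_def)

lemma base_pt_scaleR [simp]: "base_pt (t *\<^sub>R p) = t *\<^sub>R base_pt p"
  by (simp add: base_pt_def vec_eq_iff)

lemma fib_pt_scaleR [simp]: "fib_pt (t *\<^sub>R p) = complex_of_real t * fib_pt p"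
  unfolding fib_pt_def vec_nth_scaleR_complex ..

lemma base_pt_axis [simp]:
  "base_pt (axis None c) = 0" "base_pt (axis (Some j) c) = axis j c"
  by (simp_all add: base_pt_def axis_def vec_eq_iff)

lemma fib_pt_axis [simp]:
  "fib_pt (axis None c) = c" "fib_pt (axis (Some j) c) = 0"
  by (simp_all add: fib_pt_def axis_def)

lemma herm_add_left: "herm g (a + b) c = herm g a c + herm g b c"
  unfolding herm_def by (simp add: sum.distrib[symmetric] distrib_left distrib_right)

lemma herm_add_right: "herm g a (b + c) = herm g a b + herm g a c"
  unfolding herm_def by (simp add: sum.distrib[symmetric] distrib_left distrib_right)

lemma herm_scaleR_left: "herm g (t *\<^sub>R a) c = complex_of_real t * herm g a c"
  unfolding herm_def vec_nth_scaleR_complex by (simp add: sum_distrib_left mult_ac)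

lemma herm_scaleR_right: "herm g a (t *\<^sub>R c) = complex_of_real t * herm g a c"
  unfolding herm_def vec_nth_scaleR_complex by (simp add: sum_distrib_left mult_ac)

lemma herm_axis_axis: "herm g (axis j a) (axis k b) = g$j$k * a * cnj b"
  unfolding herm_def axis_def by (simp add: if_distrib[of cnj] if_distrib[of "\<lambda>x. _ * x"] if_distrib[of "\<lambda>x. x * _"]
      sum.delta cong: if_cong)

lemma herm_line:
  "herm g (z + t *\<^sub>R v) (z + t *\<^sub>R v) =
     herm g z z + complex_of_real t * (herm g z v + herm g v z) + complex_of_real (t\<^sup>2) * herm g v v"
  by (simp add: herm_add_left herm_add_right herm_scaleR_left herm_scaleR_right algebra_simps
      power2_eq_square)

lemma hD_pos_iff: "0 < hD g p \<longleftrightarrow> fib_pt p \<noteq> 0"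
  by (simp add: hD_def zero_less_mult_iff)

lemma hD_line: "hD g (p + t *\<^sub>R v) =
   ((Re (fib_pt p) + t * Re (fib_pt v))\<^sup>2 + (Im (fib_pt p) + t * Im (fib_pt v))\<^sup>2) *
   exp (Re (herm g (base_pt p) (base_pt p))
        + t * Re (herm g (base_pt p) (base_pt v) + herm g (base_pt v) (base_pt p))
        + t\<^sup>2 * Re (herm g (base_pt v) (base_pt v)))"
  unfolding hD_def by (simp add: herm_line cmod_power2)

lemma fib_pt_le_of_hD_less_one:
  assumes "hD g p < 1"
  shows "cmod (fib_pt p) \<le> exp (- Re (herm g (base_pt p) (base_pt p)) / 2)"
proof -
  define Q where "Q = Re (herm g (base_pt p) (base_pt p))"
  have "(cmod (fib_pt p))\<^sup>2 * exp Q < 1" using assms unfolding hD_def Q_def .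
  then have "(cmod (fib_pt p))\<^sup>2 < 1 / exp Q" by (simp add: less_divide_eq)
  also have "\<dots> = exp (- Q)" by (simp add: exp_minus inverse_eq_divide)
  also have "\<dots> = (exp (- Q / 2))\<^sup>2" by (simp add: power2_eq_square flip: exp_add)
  finally have "(cmod (fib_pt p))\<^sup>2 \<le> (exp (- Q / 2))\<^sup>2" by (rule less_imp_le)
  then have "cmod (fib_pt p) \<le> exp (- Q / 2)" by (rule power2_le_imp_le) simp
  then show ?thesis unfolding Q_def .
qed

lemma eventually_hD_line_in_unit_interval:
  assumes "0 < hD g p" "hD g p < 1"
  shows "\<forall>\<^sub>F s in nhds 0. 0 < hD g (p + s *\<^sub>R u) \<and> hD g (p + s *\<^sub>R u) < 1"
proof -
  have "isCont (\<lambda>s. hD g (p + s *\<^sub>R u)) 0"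
    unfolding hD_line by (intro continuous_intros)
  then have "((\<lambda>s. hD g (p + s *\<^sub>R u)) \<longlongrightarrow> hD g p) (at 0)"
    by (simp add: isCont_def)
  then have "\<forall>\<^sub>F s in at 0. 0 < hD g (p + s *\<^sub>R u) \<and> hD g (p + s *\<^sub>R u) < 1"
    using order_tendstoD[OF _ assms(1)] order_tendstoD[OF _ assms(2)] eventually_conj by blast
  then show ?thesis
    using assms by (simp add: eventually_nhds_conv_at)
qed

lemma sets_borel_fund_dom:
  fixes Lm :: "complex^'d::finite \<Rightarrow> complex^'d"
  assumes "linear Lm" "bij Lm"
  shows "fund_dom Lm \<in> sets borel"
proof -
  define B :: "(complex^'d) set" where "B = {z. \<forall>j. Re (z$j) \<in> {0..<1} \<and> Im (z$j) \<in> {0..<1}}"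
  have [measurable]: "(\<lambda>z::complex^'d. z$j) \<in> borel_measurable borel" for j
    by (intro borel_measurable_continuous_onI continuous_intros)
  have "B \<in> sets borel" unfolding B_def by measurable
  moreover have "bounded_linear (inv Lm)"
    using assms by (intro inj_linear_imp_inv_bounded_linear) (auto simp: linear_conv_bounded_linear bij_def)
  then have "inv Lm \<in> borel_measurable borel"
    by (intro borel_measurable_continuous_onI linear_continuous_on)
  moreover have "inv Lm -` B = inv (inv Lm) ` B"
    using assms(2) by (intro bij_vimage_eq_inv_image bij_imp_bij_inv)
  then have "inv Lm -` B = fund_dom Lm"
    unfolding fund_dom_def B_def inv_inv_eq[OF assms(2)] .
  ultimately show ?thesis by (metis measurable_sets_borel)
qed

lemma continuous_on_holo: "holo f \<Longrightarrow> continuous_on UNIV f"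
  unfolding holo_def by (intro continuous_at_imp_continuous_on ballI) (metis has_derivative_continuous)

section \<open>The volume form of the cusp\<close>

definition dlog_hD :: "complex^'d^'d \<Rightarrow> complex^('d::finite option) \<Rightarrow> complex^('d option) \<Rightarrow> real"
  where "dlog_hD g p v = 2 * Re (cnj (fib_pt p) * fib_pt v) / (cmod (fib_pt p))\<^sup>2
     + Re (herm g (base_pt p) (base_pt v) + herm g (base_pt v) (base_pt p))"

definition d2log_hD ::
    "complex^'d^'d \<Rightarrow> complex^('d::finite option) \<Rightarrow> complex^('d option) \<Rightarrow> complex^('d option) \<Rightarrow> real"
  where "d2log_hD g p u v = 2 * Re (cnj (fib_pt u) * fib_pt v) / (cmod (fib_pt p))\<^sup>2
     - 2 * Re (cnj (fib_pt p) * fib_pt v) * (2 * Re (cnj (fib_pt p) * fib_pt u)) / cmod (fib_pt p) ^ 4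
     + Re (herm g (base_pt u) (base_pt v) + herm g (base_pt v) (base_pt u))"

lemma ln_hD_line_has_derivative:
  assumes "fib_pt p \<noteq> 0"
  shows "((\<lambda>t. ln (hD g (p + t *\<^sub>R v))) has_real_derivative dlog_hD g p v) (at 0)"
proof -
  define a b c d where "a = Re (fib_pt p)" "b = Im (fib_pt p)" "c = Re (fib_pt v)" "d = Im (fib_pt v)"
  define A B C where "A = Re (herm g (base_pt p) (base_pt p))"
    "B = Re (herm g (base_pt p) (base_pt v) + herm g (base_pt v) (base_pt p))"
    "C = Re (herm g (base_pt v) (base_pt v))"
  have pos: "a\<^sup>2 + b\<^sup>2 > 0"
    using assms unfolding a_b_c_d_def by (metis cmod_power2 zero_less_norm_iff zero_less_power)
  have "((\<lambda>t. ln (((a + t * c)\<^sup>2 + (b + t * d)\<^sup>2) * exp (A + t * B + t\<^sup>2 * C))) has_real_derivative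
        ((2 * a * c + 2 * b * d) * exp A + (a\<^sup>2 + b\<^sup>2) * (exp A * B)) / ((a\<^sup>2 + b\<^sup>2) * exp A)) (at 0)"
    using pos by (auto intro!: derivative_eq_intros simp: power2_eq_square)
  moreover have "((2 * a * c + 2 * b * d) * exp A + (a\<^sup>2 + b\<^sup>2) * (exp A * B)) / ((a\<^sup>2 + b\<^sup>2) * exp A)
      = (2 * a * c + 2 * b * d) / (a\<^sup>2 + b\<^sup>2) + B"
    using pos by (simp add: divide_simps) (auto simp: algebra_simps)
  moreover have "\<dots> = dlog_hD g p v"
    unfolding dlog_hD_def a_b_c_d_def A_B_C_def by (simp add: cmod_power2)
  ultimately show ?thesis
    unfolding hD_line a_b_c_d_def A_B_C_def by simp
qed

lemma dlog_hD_line: "dlog_hD g (p + s *\<^sub>R u) v =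
   2 * ((Re (fib_pt p) + s * Re (fib_pt u)) * Re (fib_pt v) + (Im (fib_pt p) + s * Im (fib_pt u)) * Im (fib_pt v))
     / ((Re (fib_pt p) + s * Re (fib_pt u))\<^sup>2 + (Im (fib_pt p) + s * Im (fib_pt u))\<^sup>2)
   + (Re (herm g (base_pt p) (base_pt v) + herm g (base_pt v) (base_pt p))
      + s * Re (herm g (base_pt u) (base_pt v) + herm g (base_pt v) (base_pt u)))"
  unfolding dlog_hD_def
  by (simp add: herm_add_left herm_add_right herm_scaleR_left herm_scaleR_right cmod_power2 algebra_simps)

lemma dlog_hD_line_has_derivative:
  assumes "fib_pt p \<noteq> 0"
  shows "((\<lambda>s. dlog_hD g (p + s *\<^sub>R u) v) has_real_derivative d2log_hD g p u v) (at 0)"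
proof -
  define w1 w2 a1 a2 b1 b2 where "w1 = Re (fib_pt p)" "w2 = Im (fib_pt p)"
    "a1 = Re (fib_pt u)" "a2 = Im (fib_pt u)" "b1 = Re (fib_pt v)" "b2 = Im (fib_pt v)"
  define H0 H1 where "H0 = Re (herm g (base_pt p) (base_pt v) + herm g (base_pt v) (base_pt p))"
    "H1 = Re (herm g (base_pt u) (base_pt v) + herm g (base_pt v) (base_pt u))"
  have pos: "w1\<^sup>2 + w2\<^sup>2 > 0"
    using assms unfolding w1_w2_a1_a2_b1_b2_def by (metis cmod_power2 zero_less_norm_iff zero_less_power)
  have "((\<lambda>s. 2 * ((w1 + s * a1) * b1 + (w2 + s * a2) * b2) / ((w1 + s * a1)\<^sup>2 + (w2 + s * a2)\<^sup>2)
           + (H0 + s * H1)) has_real_derivative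
     (2 * (a1 * b1 + a2 * b2) * (w1\<^sup>2 + w2\<^sup>2) - 2 * (w1 * b1 + w2 * b2) * (2 * (w1 * a1 + w2 * a2)))
       / ((w1\<^sup>2 + w2\<^sup>2) * (w1\<^sup>2 + w2\<^sup>2)) + H1) (at 0)"
    using pos by (auto intro!: derivative_eq_intros simp: power2_eq_square algebra_simps)
  moreover have "cmod (fib_pt p) ^ 4 = (w1\<^sup>2 + w2\<^sup>2) * (w1\<^sup>2 + w2\<^sup>2)"
    unfolding w1_w2_a1_a2_b1_b2_def by (simp add: power4_eq_xxxx flip: cmod_power2)
  then have "(2 * (a1 * b1 + a2 * b2) * (w1\<^sup>2 + w2\<^sup>2) - 2 * (w1 * b1 + w2 * b2) * (2 * (w1 * a1 + w2 * a2)))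
       / ((w1\<^sup>2 + w2\<^sup>2) * (w1\<^sup>2 + w2\<^sup>2)) + H1 = d2log_hD g p u v"
    using pos unfolding d2log_hD_def w1_w2_a1_a2_b1_b2_def H0_H1_def
    by (simp add: cmod_power2 diff_divide_distrib)
  ultimately show ?thesis
    unfolding dlog_hD_line w1_w2_a1_a2_b1_b2_def H0_H1_def by simp
qed

lemma PhiV_line_has_derivative:
  assumes "0 < hD g p" "hD g p < 1"
  shows "((\<lambda>t. PhiV g (p + t *\<^sub>R v)) has_real_derivative dlog_hD g p v / - ln (hD g p)) (at 0)"
proof -
  have "fib_pt p \<noteq> 0" using assms(1) hD_pos_iff by blast
  then have "((\<lambda>t. - ln (hD g (p + t *\<^sub>R v))) has_real_derivative - dlog_hD g p v) (at 0)"
    by (intro DERIV_minus ln_hD_line_has_derivative)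
  moreover have "0 < - ln (hD g (p + 0 *\<^sub>R v))" using assms by simp
  ultimately have "((\<lambda>t. - ln (- ln (hD g (p + t *\<^sub>R v)))) has_real_derivative
      - (1 / - ln (hD g (p + 0 *\<^sub>R v)) * - dlog_hD g p v)) (at 0)"
    by (intro DERIV_minus) (rule DERIV_chain2[OF DERIV_ln_divide])
  then show ?thesis unfolding PhiV_def by simp
qed

lemma dirderiv_PhiV:
  assumes "0 < hD g p" "hD g p < 1"
  shows "dirderiv (PhiV g) v p = dlog_hD g p v / - ln (hD g p)"
  unfolding dirderiv_def using PhiV_line_has_derivative[OF assms] by (rule DERIV_imp_deriv)

lemma dirderiv2_PhiV:
  assumes "0 < hD g p" "hD g p < 1"
  shows "dirderiv (\<lambda>q. dirderiv (PhiV g) v q) u p =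
     d2log_hD g p u v / - ln (hD g p) + dlog_hD g p u * dlog_hD g p v / (- ln (hD g p))\<^sup>2"
proof -
  have fib: "fib_pt p \<noteq> 0" using assms(1) hD_pos_iff by blast
  have "\<forall>\<^sub>F s in nhds 0. dirderiv (PhiV g) v (p + s *\<^sub>R u)
      = dlog_hD g (p + s *\<^sub>R u) v / - ln (hD g (p + s *\<^sub>R u))"
    using eventually_hD_line_in_unit_interval[OF assms, of u] by eventually_elim (simp add: dirderiv_PhiV)
  then have "dirderiv (\<lambda>q. dirderiv (PhiV g) v q) u p
      = deriv (\<lambda>s. dlog_hD g (p + s *\<^sub>R u) v / - ln (hD g (p + s *\<^sub>R u))) 0"
    unfolding dirderiv_def[of "\<lambda>q. dirderiv (PhiV g) v q"] by (rule deriv_cong_ev) simp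
  also have "\<dots> = (d2log_hD g p u v * - ln (hD g p) - dlog_hD g p v * - dlog_hD g p u)
      / (- ln (hD g p) * - ln (hD g p))"
  proof (rule DERIV_imp_deriv)
    have "((\<lambda>s. - ln (hD g (p + s *\<^sub>R u))) has_real_derivative - dlog_hD g p u) (at 0)"
      using fib by (intro DERIV_minus ln_hD_line_has_derivative)
    moreover have "- ln (hD g (p + 0 *\<^sub>R u)) \<noteq> 0" using assms by simp
    ultimately have "((\<lambda>s. dlog_hD g (p + s *\<^sub>R u) v / - ln (hD g (p + s *\<^sub>R u))) has_real_derivative
        (d2log_hD g p u v * - ln (hD g (p + 0 *\<^sub>R u)) - dlog_hD g (p + 0 *\<^sub>R u) v * - dlog_hD g p u)
          / (- ln (hD g (p + 0 *\<^sub>R u)) * - ln (hD g (p + 0 *\<^sub>R u)))) (at 0)"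
      by (rule DERIV_divide[OF dlog_hD_line_has_derivative[OF fib]])
    then show "((\<lambda>s. dlog_hD g (p + s *\<^sub>R u) v / - ln (hD g (p + s *\<^sub>R u))) has_real_derivative
        (d2log_hD g p u v * - ln (hD g p) - dlog_hD g p v * - dlog_hD g p u)
          / (- ln (hD g p) * - ln (hD g p))) (at 0)"
      by simp
  qed
  also have "\<dots> = d2log_hD g p u v / - ln (hD g p) + dlog_hD g p u * dlog_hD g p v / (- ln (hD g p))\<^sup>2"
    using assms by (simp add: field_simps power2_eq_square)
  finally show ?thesis .
qed

definition herm_padded :: "complex^'d^'d \<Rightarrow> 'd option \<Rightarrow> 'd option \<Rightarrow> complex" where
  "herm_padded g j k = (case (j, k) of (Some j', Some k') \<Rightarrow> g$j'$k' | _ \<Rightarrow> 0)"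

definition dz_log_hD :: "complex^'d^'d \<Rightarrow> complex^('d::finite option) \<Rightarrow> 'd option \<Rightarrow> complex" where
  "dz_log_hD g p j = complex_of_real (dlog_hD g p (axis j 1)) / 2 - \<i> * complex_of_real (dlog_hD g p (axis j \<i>)) / 2"

lemma d2log_hD_commute: "d2log_hD g p u v = d2log_hD g p v u"
  unfolding d2log_hD_def by (simp add: algebra_simps)

lemma d2log_hD_fibre_harmonic:
  assumes "fib_pt p \<noteq> 0"
  shows "d2log_hD g p (axis None 1) (axis None 1) + d2log_hD g p (axis None \<i>) (axis None \<i>) = 0"
proof -
  define c where "c = (cmod (fib_pt p))\<^sup>2"
  have c: "c \<noteq> 0" "cmod (fib_pt p) ^ 4 = c\<^sup>2" "(cmod (fib_pt p))\<^sup>2 = c"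
    using assms unfolding c_def by (simp_all flip: power_mult)
  have "d2log_hD g p (axis None 1) (axis None 1) + d2log_hD g p (axis None \<i>) (axis None \<i>)
      = 4 * (c - ((Re (fib_pt p))\<^sup>2 + (Im (fib_pt p))\<^sup>2)) / c\<^sup>2"
    unfolding d2log_hD_def c(2,3) using c(1) by (simp add: herm_def field_simps power2_eq_square)
  also have "\<dots> = 0" unfolding c_def by (simp add: cmod_power2)
  finally show ?thesis .
qed

lemma levi_d2log_hD:
  assumes "flat_kaehler g" "fib_pt p \<noteq> 0"
  shows "(1/4) * (complex_of_real (d2log_hD g p (axis j 1) (axis k 1) + d2log_hD g p (axis j \<i>) (axis k \<i>))
     + \<i> * complex_of_real (d2log_hD g p (axis j 1) (axis k \<i>) - d2log_hD g p (axis j \<i>) (axis k 1)))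
     = herm_padded g j k"
proof (cases j; cases k)
  assume "j = None" "k = None"
  then show ?thesis
    using d2log_hD_fibre_harmonic[OF assms(2)] d2log_hD_commute[of g p "axis None 1" "axis None \<i>"]
    by (simp add: herm_padded_def)
next
  fix j' k' assume "j = Some j'" "k = Some k'"
  moreover have "g$k'$j' = cnj (g$j'$k')" using assms(1) unfolding flat_kaehler_def by blast
  ultimately show ?thesis
    by (simp add: d2log_hD_def herm_padded_def herm_axis_axis complex_eq_iff)
qed (simp_all add: d2log_hD_def herm_padded_def herm_def)

lemma levi_entry_split:
  fixes A1 A2 A3 A4 a b c d l :: real
  assumes "l \<noteq> 0"
  shows "(1/4) * (complex_of_real ((A1/l + a*c/l\<^sup>2) + (A2/l + b*d/l\<^sup>2))
        + \<i> * complex_of_real ((A3/l + a*d/l\<^sup>2) - (A4/l + b*c/l\<^sup>2)))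
      = ((1/4) * (complex_of_real (A1 + A2) + \<i> * complex_of_real (A3 - A4))) / complex_of_real l
        + (complex_of_real a / 2 - \<i> * complex_of_real b / 2) * cnj (complex_of_real c / 2 - \<i> * complex_of_real d / 2)
          / complex_of_real (l\<^sup>2)"
  using assms by (simp add: complex_eq_iff field_simps power2_eq_square)

lemma levi_PhiV:
  assumes "flat_kaehler g" "0 < hD g p" "hD g p < 1"
  shows "levi (PhiV g) p $ j $ k = herm_padded g j k / complex_of_real (- ln (hD g p))
     + dz_log_hD g p j * cnj (dz_log_hD g p k) / complex_of_real ((- ln (hD g p))\<^sup>2)"
proof -
  have l: "- ln (hD g p) \<noteq> 0" using assms by simp
  have fib: "fib_pt p \<noteq> 0" using assms hD_pos_iff by blast
  show ?thesis
    unfolding levi_def Let_def vec_lambda_beta dirderiv2_PhiV[OF assms(2,3)]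
    unfolding levi_entry_split[OF l] levi_d2log_hD[OF assms(1) fib] dz_log_hD_def ..
qed

lemma dz_log_hD_None: "dz_log_hD g p None = 1 / fib_pt p"
proof -
  have "dlog_hD g p (axis None 1) = 2 * Re (fib_pt p) / (cmod (fib_pt p))\<^sup>2"
    and "dlog_hD g p (axis None \<i>) = 2 * Im (fib_pt p) / (cmod (fib_pt p))\<^sup>2"
    by (simp_all add: dlog_hD_def herm_def)
  then have "dz_log_hD g p None = cnj (fib_pt p) / complex_of_real ((cmod (fib_pt p))\<^sup>2)"
    by (simp add: dz_log_hD_def complex_eq_iff)
  then show ?thesis by (simp add: complex_div_cnj[of 1])
qed

lemma det_levi_PhiV:
  fixes g :: "complex^'d::finite^'d"
  assumes "flat_kaehler g" "0 < hD g p" "hD g p < 1"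
  shows "det (levi (PhiV g) p)
    = det g * complex_of_real (1 / ((- ln (hD g p)) ^ (CARD('d) + 2) * (cmod (fib_pt p))\<^sup>2))"
proof -
  define l where "l = - ln (hD g p)"
  have fib: "fib_pt p \<noteq> 0" using assms hD_pos_iff by blast
  have "det (levi (PhiV g) p) = det (\<chi> j k. herm_padded g (Some j) (Some k) / complex_of_real l)
      * (dz_log_hD g p None * (cnj (dz_log_hD g p None) / complex_of_real (l\<^sup>2)))"
    by (rule det_rank_one_update_option)
      (simp_all add: levi_PhiV[OF assms] l_def herm_padded_def dz_log_hD_None fib split: option.split)
  also have "(\<chi> j k. herm_padded g (Some j) (Some k) / complex_of_real l) = (\<chi> j k. g$j$k / complex_of_real l)"
    by (simp add: herm_padded_def)
  also have "det (\<chi> j k. g$j$k / complex_of_real l) = (1 / complex_of_real l) ^ CARD('d) * det g"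
    by (rule det_scaled)
  moreover have "fib_pt p * cnj (fib_pt p) = (complex_of_real (cmod (fib_pt p)))\<^sup>2"
    by (simp flip: complex_norm_square)
  ultimately show ?thesis
    unfolding dz_log_hD_None l_def[symmetric] by (simp add: power_add power_one_over power2_eq_square mult_ac)
qed

lemma vol_density_PhiV:
  fixes g :: "complex^'d::finite^'d"
  assumes "flat_kaehler g" "0 < hD g p" "hD g p < 1"
  shows "vol_density (PhiV g) p
    = 2 * 2 ^ CARD('d) * Re (det g) / ((- ln (hD g p)) ^ (CARD('d) + 2) * (cmod (fib_pt p))\<^sup>2)"
  unfolding vol_density_def det_levi_PhiV[OF assms] by simp

lemma weighted_vol_density_PhiV:
  fixes g :: "complex^'d::finite^'d"
  assumes "flat_kaehler g" "0 < hD g p" "hD g p < 1" "CARD('d) + 2 \<le> m" "1 \<le> q"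
  shows "(cmod (fib_pt p)) ^ (2 * q) * \<bar>ln (hD g p)\<bar> ^ m * vol_density (PhiV g) p
    = 2 * (cmod (fib_pt p)) ^ (2 * (q - 1)) * \<bar>ln (hD g p)\<bar> ^ (m - CARD('d) - 2) * (2 ^ CARD('d) * Re (det g))"
proof -
  define l W where "l = - ln (hD g p)" "W = (cmod (fib_pt p))\<^sup>2"
  have pos: "0 < l" "0 < W" using assms hD_pos_iff unfolding l_W_def by auto
  have abs: "\<bar>ln (hD g p)\<bar> = l" using assms unfolding l_W_def by simp
  have pw: "(cmod (fib_pt p)) ^ (2 * k) = W ^ k" for k unfolding l_W_def by (simp add: power_mult)
  have lm: "l ^ m = l ^ (m - CARD('d) - 2) * l ^ (CARD('d) + 2)"
    using assms(4) by (metis le_add_diff_inverse2 diff_diff_left power_add)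
  have Wq: "W ^ q = W * W ^ (q - 1)" using assms(5) by (simp flip: power_Suc)
  show ?thesis
    unfolding vol_density_PhiV[OF assms(1-3)] l_W_def[symmetric] abs pw lm Wq
    using pos by (simp add: field_simps)
qed

section \<open>The mass estimate\<close>

lemma cusp_integrand_le:
  fixes g :: "complex^'d::finite^'d"
  assumes g: "flat_kaehler g" and "0 < \<kappa>" "\<kappa> \<le> hD g p" "hD g p < 1"
    and m: "CARD('d) + 2 \<le> m" and q: "1 \<le> q" and a: "0 \<le> a"
  defines "Q \<equiv> Re (herm g (base_pt p) (base_pt p))"
  shows "ennreal (a * (cmod (th (base_pt p)))\<^sup>2 * (cmod (fib_pt p)) ^ (2 * q) * \<bar>ln (hD g p)\<bar> ^ m
            * vol_density (PhiV g) p)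
    \<le> indicator (cball 0 (exp (- Q / 2))) (fib_pt p) *
      ennreal (a * (cmod (th (base_pt p)))\<^sup>2 * (2 * exp (- Q) ^ (q - 1) * \<bar>ln \<kappa>\<bar> ^ (m - CARD('d) - 2))
        * (2 ^ CARD('d) * Re (det g)))"
proof -
  have h: "0 < hD g p" "hD g p < 1" using assms by auto
  have disk: "cmod (fib_pt p) \<le> exp (- Q / 2)"
    unfolding Q_def using h(2) by (rule fib_pt_le_of_hD_less_one)
  have "(cmod (fib_pt p))\<^sup>2 \<le> (exp (- Q / 2))\<^sup>2" using disk by (simp add: power_mono)
  also have "\<dots> = exp (- Q)" by (simp add: power2_eq_square flip: exp_add)
  finally have "(cmod (fib_pt p)) ^ (2 * (q - 1)) \<le> exp (- Q) ^ (q - 1)"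
    by (simp add: power_mult power_mono)
  moreover have "\<bar>ln (hD g p)\<bar> ^ (m - CARD('d) - 2) \<le> \<bar>ln \<kappa>\<bar> ^ (m - CARD('d) - 2)"
    using assms h by (intro power_mono) auto
  ultimately have "2 * (cmod (fib_pt p)) ^ (2 * (q - 1)) * \<bar>ln (hD g p)\<bar> ^ (m - CARD('d) - 2)
      \<le> 2 * exp (- Q) ^ (q - 1) * \<bar>ln \<kappa>\<bar> ^ (m - CARD('d) - 2)"
    by (intro mult_mono mult_left_mono) auto
  then have "ennreal (a * (cmod (th (base_pt p)))\<^sup>2 * (2 * (cmod (fib_pt p)) ^ (2 * (q - 1))
        * \<bar>ln (hD g p)\<bar> ^ (m - CARD('d) - 2)) * (2 ^ CARD('d) * Re (det g)))
      \<le> ennreal (a * (cmod (th (base_pt p)))\<^sup>2 * (2 * exp (- Q) ^ (q - 1) * \<bar>ln \<kappa>\<bar> ^ (m - CARD('d) - 2))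
        * (2 ^ CARD('d) * Re (det g)))"
    using a by (intro ennreal_mult_right_mono_real mult_left_mono) auto
  then show ?thesis
    using disk weighted_vol_density_PhiV[OF g h m q] by (simp add: mult.assoc)
qed

lemma cusp_mass_le:
  fixes Lm :: "complex^'d::finite \<Rightarrow> complex^'d" and th :: "complex^'d \<Rightarrow> complex"
  defines "n \<equiv> CARD('d) + 1"
  assumes cusp: "cusp_data Lm g e" and \<kappa>: "0 < \<kappa>" "\<kappa> < 1"
    and m: "n + 1 \<le> m" and q: "1 \<le> q"
    and q_small: "real q \<le> exp (-4 * (K + \<bar>ln \<bar>ln \<kappa>\<bar>\<bar> + real n + 4)) * real m"
    and th: "is_section Lm e q th"
  shows "(\<integral>\<^sup>+ p. indicator {p. base_pt p \<in> fund_dom Lm \<and> \<kappa> \<le> hD g p \<and> hD g p < 1} p *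
            ennreal ((real n * real q ^ (m - n) / (2 * pi * fact (m - n - 1))) *
               (cmod (th (base_pt p)))\<^sup>2 * (cmod (fib_pt p)) ^ (2 * q) *
               \<bar>ln (hD g p)\<bar> ^ m * vol_density (PhiV g) p) \<partial>lborel)
       \<le> ennreal (real n * fact (n + 1) * exp (-4 * K * real m)) *
         (\<integral>\<^sup>+ z. indicator (fund_dom Lm) z *
            ennreal ((cmod (th z))\<^sup>2 * exp (- real q * Re (herm g z z)) *
                     (2 ^ CARD('d) * Re (det g))) \<partial>lborel)"
    (is "?mass \<le> _ * (\<integral>\<^sup>+ z. ?H z \<partial>lborel)")
proof -
  have g: "flat_kaehler g" and F: "fund_dom Lm \<in> sets borel"
    using cusp sets_borel_fund_dom unfolding cusp_data_def by auto
  have th_cont: "continuous_on UNIV th"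
    using th unfolding is_section_def by (auto intro: continuous_on_holo)
  define a where "a = real n * real q ^ (m - n) / (2 * pi * fact (m - n - 1))"
  define N B where "N = m - CARD('d) - 2" "B = 2 * pi * a * \<bar>ln \<kappa>\<bar> ^ N"
  define Q where "Q z = Re (herm g z z)" for z
  define c where "c z = a * (cmod (th z))\<^sup>2 * (2 * exp (- Q z) ^ (q - 1) * \<bar>ln \<kappa>\<bar> ^ N)
    * (2 ^ CARD('d) * Re (det g))" for z
  \<comment> \<open>G dominates the integrand; the disc fibres of area pi exp (- Q z) turn exp (- Q z) ^ (q - 1)
    into the weight exp (- q Q z) of the section.\<close>
  define G where "G x = indicator (fund_dom Lm) (fst x) * indicator (cball 0 (exp (- Q (fst x) / 2))) (snd x)
    * ennreal (c (fst x))" for x :: "(complex^'d) \<times> complex"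
  have Q_cont: "continuous_on UNIV Q" unfolding Q_def herm_def by (intro continuous_intros)
  have "continuous_on UNIV c" unfolding c_def
    by (intro continuous_intros continuous_on_compose2[OF th_cont] continuous_on_compose2[OF Q_cont]) auto
  moreover have "continuous_on UNIV (\<lambda>z. exp (- Q z / 2))" by (intro continuous_intros Q_cont) auto
  ultimately have G_meas: "G \<in> borel_measurable borel"
    unfolding G_def using F by (intro borel_measurable_disk_bundle)
  have "a \<ge> 0" "B \<ge> 0" unfolding a_def N_B_def by simp_all
  have "?mass \<le> (\<integral>\<^sup>+ p. G (base_pt p, fib_pt p) \<partial>lborel)"
    unfolding a_def[symmetric]
  proof (rule nn_integral_mono)
    fix p :: "complex^('d option)"
    have "CARD('d) + 2 \<le> m" using m unfolding n_def by auto
    then show "indicator {p. base_pt p \<in> fund_dom Lm \<and> \<kappa> \<le> hD g p \<and> hD g p < 1} p *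
        ennreal (a * (cmod (th (base_pt p)))\<^sup>2 * (cmod (fib_pt p)) ^ (2 * q) *
          \<bar>ln (hD g p)\<bar> ^ m * vol_density (PhiV g) p) \<le> G (base_pt p, fib_pt p)"
      using cusp_integrand_le[OF g \<kappa>(1) _ _ _ q \<open>a \<ge> 0\<close>, of p m th]
      unfolding G_def c_def Q_def N_B_def by (cases "p \<in> {p. base_pt p \<in> fund_dom Lm \<and> \<kappa> \<le> hD g p \<and> hD g p < 1}") auto
  qed
  also have "\<dots> = (\<integral>\<^sup>+ z. \<integral>\<^sup>+ w. G (z, w) \<partial>lborel \<partial>lborel)"
    using nn_integral_lborel_vec_option[OF G_meas] by (simp add: base_pt_def fib_pt_def)
  also have "\<dots> = (\<integral>\<^sup>+ z. ennreal B * ?H z \<partial>lborel)"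
  proof (rule nn_integral_cong)
    fix z
    have "exp (- Q z) ^ (q - 1) * exp (- Q z) = exp (- Q z) ^ q"
      using q by (simp flip: power_Suc2)
    also have "\<dots> = exp (- real q * Q z)" by (simp flip: exp_of_nat_mult)
    finally have cB: "c z * (pi * (exp (- Q z / 2))\<^sup>2)
        = B * ((cmod (th z))\<^sup>2 * exp (- real q * Re (herm g z z)) * (2 ^ CARD('d) * Re (det g)))"
      unfolding c_def N_B_def Q_def[symmetric] by (simp add: power2_eq_square mult_ac flip: exp_add)
    have "(\<integral>\<^sup>+ w. G (z, w) \<partial>lborel) = (\<integral>\<^sup>+ w. indicator (fund_dom Lm) z
        * (indicator (cball (0::complex) (exp (- Q z / 2))) w * ennreal (c z)) \<partial>lborel)"
      unfolding G_def by (simp add: mult.assoc)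
    also have "\<dots> = indicator (fund_dom Lm) z
        * (\<integral>\<^sup>+ w. indicator (cball (0::complex) (exp (- Q z / 2))) w * ennreal (c z) \<partial>lborel)"
      by (rule nn_integral_cmult) (measurable, simp_all add: pred_def)
    also have "\<dots> = indicator (fund_dom Lm) z * ennreal (c z * (pi * (exp (- Q z / 2))\<^sup>2))"
      by (subst nn_integral_indicator_disk) auto
    also have "\<dots> = ennreal B * ?H z"
      unfolding cB by (simp add: ennreal_mult'[OF \<open>B \<ge> 0\<close>] ac_simps)
    finally show "(\<integral>\<^sup>+ w. G (z, w) \<partial>lborel) = ennreal B * ?H z" .
  qed
  also have "\<dots> = ennreal B * (\<integral>\<^sup>+ z. ?H z \<partial>lborel)"
  proof (rule nn_integral_cmult)
    have "continuous_on UNIV (\<lambda>z. (cmod (th z))\<^sup>2 * exp (- real q * Q z) * (2 ^ CARD('d) * Re (det g)))"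
      by (intro continuous_intros continuous_on_compose2[OF th_cont] continuous_on_compose2[OF Q_cont]) auto
    then have [measurable]: "(\<lambda>z. (cmod (th z))\<^sup>2 * exp (- real q * Re (herm g z z)) * (2 ^ CARD('d) * Re (det g)))
        \<in> borel_measurable borel"
      unfolding Q_def by (rule borel_measurable_continuous_onI)
    show "?H \<in> borel_measurable lborel" using F by measurable
  qed
  also have "\<dots> \<le> ennreal (real n * fact (n + 1) * exp (-4 * K * real m)) * (\<integral>\<^sup>+ z. ?H z \<partial>lborel)"
  proof (intro mult_right_mono ennreal_leI)
    have "B = real n * (real q ^ (m - n) * \<bar>ln \<kappa>\<bar> ^ (m - n - 1) / fact (m - n - 1))"
      unfolding a_def N_B_def n_def by (simp add: field_simps)
    also have "\<dots> \<le> real n * (fact (n + 1) * exp (-4 * K * real m))"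
      using cusp_coefficient_bound[OF \<kappa> _ q q_small] m by (intro mult_left_mono) auto
    finally show "B \<le> real n * fact (n + 1) * exp (-4 * K * real m)"
      by (simp add: mult.assoc)
  qed simp
  finally show ?thesis .
qed

theorem mainTheorem18:
  fixes Lm :: "complex^'d::finite \<Rightarrow> complex^'d"
    and g :: "complex^'d^'d"
    and e :: "complex^'d \<Rightarrow> complex^'d \<Rightarrow> complex"
    and \<kappa> :: real
  assumes "cusp_data Lm g e"
    and "0 < \<kappa>" and "\<kappa> < exp (-1)"
  shows "\<exists>C>0. \<forall>K::real. \<forall>m q::nat. \<forall>th.
     (let n = CARD('d) + 1 in
       0 < K \<and> n + 1 \<le> m \<and> 1 \<le> q \<and>
       real q \<le> exp (-4 * (K + \<bar>ln \<bar>ln \<kappa>\<bar>\<bar> + real n + 4)) * real m \<and>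
       is_section Lm e q th \<longrightarrow>
       (\<integral>\<^sup>+ p. indicator {p. base_pt p \<in> fund_dom Lm \<and> \<kappa> \<le> hD g p \<and> hD g p < 1} p *
            ennreal ((real n * real q ^ (m - n) / (2 * pi * fact (m - n - 1))) *
               (cmod (th (base_pt p)))^2 * (cmod (fib_pt p)) ^ (2 * q) *
               \<bar>ln (hD g p)\<bar> ^ m * vol_density (PhiV g) p) \<partial>lborel)
       \<le> ennreal (C * exp (-4 * K * real m)) *
         (\<integral>\<^sup>+ z. indicator (fund_dom Lm) z *
            ennreal ((cmod (th z))^2 * exp (- real q * Re (herm g z z)) *
                     (2 ^ CARD('d) * Re (det g))) \<partial>lborel))"
proof -
  have "\<kappa> < 1" using assms(3) exp_less_one_iff[of "-1::real"] by linarith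
  show ?thesis
    unfolding Let_def
  proof (intro exI[of _ "real (CARD('d) + 1) * fact (CARD('d) + 1 + 1)"] conjI allI impI)
    fix K :: real and m q :: nat and th
    assume "0 < K \<and> CARD('d) + 1 + 1 \<le> m \<and> 1 \<le> q \<and>
      real q \<le> exp (-4 * (K + \<bar>ln \<bar>ln \<kappa>\<bar>\<bar> + real (CARD('d) + 1) + 4)) * real m \<and>
      is_section Lm e q th"
    then show "(\<integral>\<^sup>+ p. indicator {p. base_pt p \<in> fund_dom Lm \<and> \<kappa> \<le> hD g p \<and> hD g p < 1} p *
            ennreal ((real (CARD('d) + 1) * real q ^ (m - (CARD('d) + 1)) / (2 * pi * fact (m - (CARD('d) + 1) - 1))) *
               (cmod (th (base_pt p)))^2 * (cmod (fib_pt p)) ^ (2 * q) *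
               \<bar>ln (hD g p)\<bar> ^ m * vol_density (PhiV g) p) \<partial>lborel)
       \<le> ennreal (real (CARD('d) + 1) * fact (CARD('d) + 1 + 1) * exp (-4 * K * real m)) *
         (\<integral>\<^sup>+ z. indicator (fund_dom Lm) z *
            ennreal ((cmod (th z))^2 * exp (- real q * Re (herm g z z)) *
                     (2 ^ CARD('d) * Re (det g))) \<partial>lborel)"
      using cusp_mass_le[OF assms(1,2) \<open>\<kappa> < 1\<close>] by blast
  qed simp
qed

end
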